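(* Let $F$ be a CDF on $\mathbb{R}$ and $\gamma$ a (nonnegative) Borel measure on $\mathbb{R}$. Then $$\mathrm{CRPS}_\gamma(F) = \int F(u)\left(1 - F(u)\right)\mathrm{d}\gamma(u).$$ In particular, let $\mu\in\mathbb{R}$, $\sigma>0$, $t\in\mathbb{R}$, and let $\Phi_{\mu,\sigma^2}$ be the CDF of $\mathcal{N}(\mu,\sigma^2)$. (i) For $\mathrm{d}\gamma_1(u) = \mathbb{1}\{t\leq u\}\,\mathrm{d}\lambda(u)$, with $\tilde t = (t-\mu)/\sigma$, $$\mathrm{CRPS}_{\gamma_1}(\Phi_{\mu,\sigma^2}) = \sigma\left[\tilde t\,\Phi(\tilde t)^2 - \tilde t\,\Phi(\tilde t) + \frac{1}{\sqrt{\pi}} - \frac{1}{\sqrt{\pi}}\Phi(\tilde t\sqrt{2}) + 2\phi(\tilde t)\Phi(\tilde t) - \phi(\tilde t)\right],$$ and equivalently $$\mathrm{CRPS}_{\gamma_1}(\Phi_{\mu,\sigma^2}) = \sigma\,\mathbb{E}\left[\left(\tilde N - \max\left(N, \tfrac{t-\mu}{\sigma}\right)\right)_+\right]$$ for $N,\tilde N$ i.i.d. $\mathcal{N}(0,1)$. (ii) For $\sigma_\gamma>0$ and $\mathrm{d}\gamma_2(u) = \frac{1}{\sigma_\gamma}\phi\!\left(\frac{u-t}{\sigma_\gamma}\right)\mathrm{d}\lambda(u)$, $$\mathrm{CRPS}_{\gamma_2}(\Phi_{\mu,\sigma^2}) = \Phi\!\left(\begin{pmatrix}0\\0\end{pmatrix};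 \begin{pmatrix}\mu-t\\ t-\mu\end{pmatrix}, \begin{pmatrix}\sigma_\gamma^2+\sigma^2 & -\sigma_\gamma^2\\ -\sigma_\gamma^2 & \sigma_\gamma^2+\sigma^2\end{pmatrix}\right).$$
   Context: $\lambda$ is Lebesgue measure on $\mathbb{R}$; $\phi$ and $\Phi$ are the standard normal density and CDF; $\Phi(\cdot;\boldsymbol{\mu},\boldsymbol{\Sigma})$ is the bivariate Gaussian CDF with mean $\boldsymbol{\mu}$ and covariance $\boldsymbol{\Sigma}$; $(a)_+ = \max(a,0)$. For a CDF $F$, a Borel measure $\gamma$ and $y\in\mathbb{R}$, the threshold-weighted CRPS is $\mathrm{CRPS}_\gamma(F,y) = \int_{-\infty}^{\infty}[F(u)-\mathbb{1}\{y\leq u\}]^2\,\mathrm{d}\gamma(u)$, and the expected threshold-weighted CRPS is $\mathrm{CRPS}_\gamma(F) = \int_{-\infty}^{\infty}\mathrm{CRPS}_\gamma(F,y')\,\mathrm{d}F(y')$. *)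

theory Defs
  imports "HOL-Probability.Probability"
begin

text \<open>Threshold-weighted CRPS of a CDF F at an observation y, w.r.t. a Borel measure gamma.
  The integrand is nonnegative, so the (extended nonnegative) Lebesgue integral is used.\<close>
definition crps_at :: "real measure \<Rightarrow> (real \<Rightarrow> real) \<Rightarrow> real \<Rightarrow> ennreal" where
  "crps_at \<gamma> F y = (\<integral>\<^sup>+ u. ennreal ((F u - of_bool (y \<le> u))\<^sup>2) \<partial>\<gamma>)"

definition crps_exp :: "real measure \<Rightarrow> real measure \<Rightarrow> ennreal" where
  "crps_exp \<gamma> M = (\<integral>\<^sup>+ y. crps_at \<gamma> (cdf M) y \<partial>M)"

definition std_normal_measure :: "real measure" where
  "std_normal_measure = density lborel std_normal_density"

definition std_normal_cdf :: "real \<Rightarrow> real" where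
  "std_normal_cdf x = measure std_normal_measure {..x}"

definition normal_measure :: "real \<Rightarrow> real \<Rightarrow> real measure" where
  "normal_measure \<mu> \<sigma> = density lborel (normal_density \<mu> \<sigma>)"

definition bvn_density :: "real \<Rightarrow> real \<Rightarrow> real \<Rightarrow> real \<Rightarrow> real \<Rightarrow> real \<times> real \<Rightarrow> real" where
  "bvn_density m1 m2 s11 s12 s22 z =
     (let d = s11 * s22 - s12\<^sup>2; a = fst z - m1; b = snd z - m2 in
      exp (- (s22 * a\<^sup>2 - 2 * s12 * a * b + s11 * b\<^sup>2) / (2 * d)) / (2 * pi * sqrt d))"

definition bvn_cdf :: "real \<times> real \<Rightarrow> real \<times> real \<Rightarrow> real \<times> real \<times> real \<Rightarrow> real" where
  "bvn_cdf z m S =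
     measure (density (lborel :: (real \<times> real) measure)
                (bvn_density (fst m) (snd m) (fst S) (fst (snd S)) (snd (snd S))))
             ({..fst z} \<times> {..snd z})"

definition gamma1 :: "real \<Rightarrow> real measure" where
  "gamma1 t = density lborel (\<lambda>u. ennreal (of_bool (t \<le> u)))"

definition gamma2 :: "real \<Rightarrow> real \<Rightarrow> real measure" where
  "gamma2 t s\<^sub>\<gamma> = density lborel (\<lambda>u. ennreal (std_normal_density ((u - t) / s\<^sub>\<gamma>) / s\<^sub>\<gamma>))"

end

theory Submission
  imports Defs "HOL-Real_Asymp.Real_Asymp"
begin

text \<open>
  Writing the CRPS integrand as \<open>F(u)\<^sup>2\<close> for \<open>u < y\<close> and \<open>(1 - F(u))\<^sup>2\<close> for \<open>y \<le> u\<close> and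
  integrating over \<open>y \<sim> F\<close> first gives \<open>F(u)\<^sup>2 (1 - F(u)) + (1 - F(u))\<^sup>2 F(u) = F(u) (1 - F(u))\<close>,
  so the identity is Tonelli's theorem. As \<open>\<gamma>\<close> need not be \<open>\<sigma>\<close>-finite, either \<open>\<gamma>\<close> gives
  infinite mass to a level set \<open>{F (1 - F) \<ge> 1/(n+1)}\<close>, and then both sides are infinite, or the
  restriction of \<open>\<gamma>\<close> to \<open>{0 < F < 1}\<close> is \<open>\<sigma>\<close>-finite; off that set the integrand vanishes for
  \<open>F\<close>-almost every \<open>y\<close>.

  For \<open>N(\<mu>, \<sigma>\<^sup>2)\<close> we have \<open>F(u) = \<Phi>((u - \<mu>)/\<sigma>)\<close>. In case (i) the substitution
  \<open>u = \<mu> + \<sigma> z\<close> leaves \<open>\<integral>\<^sub>a\<^sup>\<infinity> \<Phi> (1 - \<Phi>)\<close>, and the closed form is an antiderivative of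
  \<open>-\<Phi> (1 - \<Phi>)\<close> vanishing at \<open>+\<infinity>\<close> (by \<open>\<phi>(z\<surd>2) \<surd>2 / \<surd>\<pi> = 2 \<phi>(z)\<^sup>2\<close> and the Mills bound
  \<open>z (1 - \<Phi>(z)) \<le> \<phi>(z)\<close>); the expectation form follows from \<open>(y - m)\<^sub>+ = \<lambda>[m, y)\<close> and Tonelli.
  In case (ii), \<open>\<Phi>((u - \<mu>)/\<sigma>) \<Phi>((\<mu> - u)/\<sigma>) = P(\<mu> - u + \<sigma> Z\<^sub>1 \<le> 0, u - \<mu> + \<sigma> Z\<^sub>2 \<le> 0)\<close>,
  and mixing over \<open>u \<sim> N(t, s\<^sub>\<gamma>\<^sup>2)\<close> produces the bivariate normal vector of the statement.
\<close>

section \<open>The expected CRPS as an integral of F(1 - F)\<close>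

lemma (in real_distribution) emeasure_atMost_cdf: "emeasure M {..x} = ennreal (cdf M x)"
  by (simp add: emeasure_eq_measure cdf_def2)

lemma (in real_distribution) emeasure_greaterThan_cdf: "emeasure M {x<..} = ennreal (1 - cdf M x)"
proof -
  have "{x<..} = space M - {..x}" by auto
  then show ?thesis using prob_compl[of "{..x}"] by (simp add: emeasure_eq_measure cdf_def2)
qed

lemma (in real_distribution) AE_cdf_eq_0_imp_less: "AE y in M. \<forall>u. cdf M u = 0 \<longrightarrow> u < y"
proof -
  define Z where "Z = {u. cdf M u = 0}"
  \<comment> \<open>The rationals in the down-set \<open>Z\<close>, with its maximum if there is one, are cofinal in \<open>Z\<close>.\<close>
  define C where "C = Z \<inter> (\<rat> \<union> {Sup Z})"
  have "countable C" unfolding C_def by (auto intro: countable_Int2 countable_rat)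
  moreover have "AE y in M. q < y" if "q \<in> C" for q
  proof -
    have "emeasure M {..q} = 0" using that by (simp add: C_def Z_def emeasure_atMost_cdf)
    then show ?thesis by (subst AE_iff_measurable[where N="{..q}"]) (auto simp: not_less)
  qed
  ultimately have AE_C: "AE y in M. \<forall>q\<in>C. q < y" by (subst AE_ball_countable) auto
  have cofinal: "\<exists>q\<in>C. u \<le> q" if "u \<in> Z" for u
  proof (cases "\<forall>z\<in>Z. z \<le> u")
    case True
    then have "Sup Z = u" using that by (intro cSup_eq_maximum) auto
    then show ?thesis using that by (auto simp: C_def)
  next
    case False
    then obtain z where "z \<in> Z" "u < z" by (auto simp: not_le)
    moreover obtain q where "q \<in> \<rat>" "u < q" "q < z" using Rats_dense_in_real[OF \<open>u < z\<close>] by blast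
    ultimately have "q \<in> Z" using cdf_nondecreasing[of q z] cdf_nonneg[of q] by (simp add: Z_def)
    then show ?thesis using \<open>q \<in> \<rat>\<close> \<open>u < q\<close> by (auto simp: C_def intro!: bexI[of _ q])
  qed
  from AE_C show ?thesis
    by eventually_elim (use cofinal in \<open>fastforce simp: Z_def\<close>)
qed

lemma (in real_distribution) AE_cdf_eq_1_imp_le: "AE y in M. \<forall>u. cdf M u = 1 \<longrightarrow> y \<le> u"
proof -
  define C where "C = {q\<in>\<rat>. cdf M q = 1}"
  have "countable C" unfolding C_def by (rule countable_subset[OF _ countable_rat]) auto
  moreover have "AE y in M. y \<le> q" if "q \<in> C" for q
  proof -
    have "emeasure M {q<..} = 0" using that by (simp add: C_def emeasure_greaterThan_cdf)
    then show ?thesis by (subst AE_iff_measurable[where N="{q<..}"]) auto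
  qed
  ultimately have AE_C: "AE y in M. \<forall>q\<in>C. y \<le> q" by (subst AE_ball_countable) auto
  have dense: "\<exists>q\<in>C. q < y" if "cdf M u = 1" "u < y" for u y
  proof -
    obtain q where "q \<in> \<rat>" "u < q" "q < y" using Rats_dense_in_real[OF \<open>u < y\<close>] by blast
    moreover have "cdf M q = 1" using cdf_nondecreasing[of u q] cdf_bounded_prob[of q] that \<open>u < q\<close> by simp
    ultimately show ?thesis by (auto simp: C_def)
  qed
  from AE_C show ?thesis
  proof eventually_elim
    case (elim y)
    show ?case
    proof (intro allI impI)
      fix u assume "cdf M u = 1"
      show "y \<le> u"
      proof (rule ccontr)
        assume "\<not> y \<le> u"
        then obtain q where "q \<in> C" "q < y" using dense[OF \<open>cdf M u = 1\<close>] by (auto simp: not_le)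
        then show False using elim by fastforce
      qed
    qed
  qed
qed

lemma (in real_distribution) nn_integral_cdf_minus_indicator_sq:
  "(\<integral>\<^sup>+y. ennreal ((cdf M u - of_bool (y \<le> u))\<^sup>2) \<partial>M) = ennreal (cdf M u * (1 - cdf M u))"
proof -
  let ?F = "cdf M u"
  have F: "0 \<le> ?F" "?F \<le> 1" using cdf_nonneg cdf_bounded_prob by auto
  have "(\<integral>\<^sup>+y. ennreal ((?F - of_bool (y \<le> u))\<^sup>2) \<partial>M)
      = (\<integral>\<^sup>+y. ennreal (?F\<^sup>2) * indicator {u<..} y + ennreal ((1 - ?F)\<^sup>2) * indicator {..u} y \<partial>M)"
    by (intro nn_integral_cong) (auto split: split_indicator simp: power2_commute)
  also have "\<dots> = ennreal (?F\<^sup>2) * ennreal (1 - ?F) + ennreal ((1 - ?F)\<^sup>2) * ennreal ?F"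
    by (simp add: nn_integral_add nn_integral_cmult_indicator emeasure_atMost_cdf emeasure_greaterThan_cdf)
  also have "\<dots> = ennreal (?F\<^sup>2 * (1 - ?F) + (1 - ?F)\<^sup>2 * ?F)"
    using F by (simp add: ennreal_mult ennreal_plus)
  also have "?F\<^sup>2 * (1 - ?F) + (1 - ?F)\<^sup>2 * ?F = ?F * (1 - ?F)"
    by (simp add: power2_eq_square algebra_simps)
  finally show ?thesis .
qed

lemma sigma_finite_density_indicator_pos:
  fixes h :: "'a \<Rightarrow> real"
  assumes [measurable]: "h \<in> borel_measurable \<gamma>"
    and finite_levels: "\<And>n::nat. emeasure \<gamma> {x\<in>space \<gamma>. 1 / Suc n \<le> h x} \<noteq> \<infinity>"
  shows "sigma_finite_measure (density \<gamma> (indicator {x\<in>space \<gamma>. 0 < h x}))"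
proof -
  define \<nu> where "\<nu> = density \<gamma> (indicator {x\<in>space \<gamma>. 0 < h x})"
  define Z where "Z = {x\<in>space \<gamma>. h x \<le> 0}"
  define L where "L n = {x\<in>space \<gamma>. 1 / Suc n \<le> h x}" for n :: nat
  have "x \<in> Z \<union> (\<Union>n. L n)" if "x \<in> space \<gamma>" for x
  proof (cases "0 < h x")
    case True
    then obtain n where "inverse (real (Suc n)) < h x" using reals_Archimedean by blast
    then have "x \<in> L n" using that by (auto simp: L_def field_simps)
    then show ?thesis by blast
  qed (use that in \<open>auto simp: Z_def\<close>)
  then have cover: "\<Union> (insert Z (range L)) = space \<nu>"
    by (auto simp: \<nu>_def Z_def L_def)
  have "emeasure \<nu> Z = (\<integral>\<^sup>+x. indicator {x\<in>space \<gamma>. 0 < h x} x * indicator Z x \<partial>\<gamma>)"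
    unfolding \<nu>_def by (rule emeasure_density) (auto simp: Z_def)
  also have "\<dots> = 0"
    by (subst nn_integral_0_iff_AE) (auto simp: Z_def split: split_indicator)
  finally have finite_Z: "emeasure \<nu> Z \<noteq> \<infinity>" by simp
  have finite_L: "emeasure \<nu> (L n) \<noteq> \<infinity>" for n
  proof -
    have "emeasure \<nu> (L n) = (\<integral>\<^sup>+x. indicator {x\<in>space \<gamma>. 0 < h x} x * indicator (L n) x \<partial>\<gamma>)"
      unfolding \<nu>_def by (rule emeasure_density) (auto simp: L_def)
    also have "\<dots> \<le> (\<integral>\<^sup>+x. indicator (L n) x \<partial>\<gamma>)"
      by (intro nn_integral_mono) (auto split: split_indicator)
    also have "\<dots> = emeasure \<gamma> (L n)" by (simp add: L_def)
    finally show ?thesis using finite_levels[of n] by (auto simp: L_def top_unique)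
  qed
  show ?thesis
    unfolding \<nu>_def[symmetric] sigma_finite_measure_def
  proof (intro exI[of _ "insert Z (range L)"] conjI)
    show "insert Z (range L) \<subseteq> sets \<nu>" by (auto simp: \<nu>_def Z_def L_def)
    show "\<forall>A\<in>insert Z (range L). emeasure \<nu> A \<noteq> \<infinity>" using finite_Z finite_L by blast
  qed (use cover in simp_all)
qed

lemma nn_integral_eq_top_if_ge_on_infinite:
  assumes A: "emeasure M A = \<infinity>" and "0 < c" and ge: "\<And>x. x \<in> A \<Longrightarrow> ennreal c \<le> f x"
  shows "(\<integral>\<^sup>+x. f x \<partial>M) = \<infinity>"
proof -
  have "A \<in> sets M" using A emeasure_notin_sets by force
  then have "\<infinity> = (\<integral>\<^sup>+x. ennreal c * indicator A x \<partial>M)"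
    using assms by (simp add: nn_integral_cmult_indicator ennreal_mult_top)
  also have "\<dots> \<le> (\<integral>\<^sup>+x. f x \<partial>M)"
    by (intro nn_integral_mono) (auto split: split_indicator intro: ge)
  finally show ?thesis by (simp add: top_unique)
qed

lemma (in real_distribution) borel_measurable_cdf[measurable]: "cdf M \<in> borel_measurable borel"
  by (rule borel_measurable_mono) (simp add: mono_def cdf_nondecreasing)

lemma crps_exp_eq_nn_integral_cdf_sigma_finite:
  assumes "real_distribution M" "sigma_finite_measure \<gamma>" and sets_\<gamma>: "sets \<gamma> = sets borel"
  shows "crps_exp \<gamma> M = (\<integral>\<^sup>+u. ennreal (cdf M u * (1 - cdf M u)) \<partial>\<gamma>)"
proof -
  interpret real_distribution M by fact
  interpret \<gamma>: sigma_finite_measure \<gamma> by fact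
  interpret pair_sigma_finite M \<gamma> ..
  have sets_pair: "sets (M \<Otimes>\<^sub>M \<gamma>) = sets (borel \<Otimes>\<^sub>M borel)"
    by (rule sets_pair_measure_cong[OF events_eq_borel sets_\<gamma>])
  have "crps_exp \<gamma> M = (\<integral>\<^sup>+y. \<integral>\<^sup>+u. ennreal ((cdf M u - of_bool (y \<le> u))\<^sup>2) \<partial>\<gamma> \<partial>M)"
    by (simp add: crps_exp_def crps_at_def)
  also have "\<dots> = (\<integral>\<^sup>+u. \<integral>\<^sup>+y. ennreal ((cdf M u - of_bool (y \<le> u))\<^sup>2) \<partial>M \<partial>\<gamma>)"
    by (rule Fubini'[of "\<lambda>y u. ennreal ((cdf M u - of_bool (y \<le> u))\<^sup>2)", symmetric])
      (simp add: measurable_cong_sets[OF sets_pair refl])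
  also have "\<dots> = (\<integral>\<^sup>+u. ennreal (cdf M u * (1 - cdf M u)) \<partial>\<gamma>)"
    by (simp add: nn_integral_cdf_minus_indicator_sq)
  finally show ?thesis .
qed

lemma AE_crps_at_eq_density_cdf_support:
  assumes "real_distribution M" and sets_\<gamma>: "sets \<gamma> = sets borel"
  shows "AE y in M. crps_at \<gamma> (cdf M) y =
    crps_at (density \<gamma> (indicator {u\<in>space \<gamma>. 0 < cdf M u * (1 - cdf M u)})) (cdf M) y"
proof -
  interpret real_distribution M by fact
  have [measurable]: "cdf M \<in> borel_measurable \<gamma>"
    unfolding measurable_cong_sets[OF sets_\<gamma> refl] by simp
  have space_\<gamma>: "space \<gamma> = UNIV"
    using sets_eq_imp_space_eq[OF sets_\<gamma>] by simp
  from AE_cdf_eq_0_imp_less AE_cdf_eq_1_imp_le show ?thesis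
  proof eventually_elim
    case (elim y)
    let ?S = "{u\<in>space \<gamma>. 0 < cdf M u * (1 - cdf M u)}"
    have restrict: "indicator ?S u * ennreal ((cdf M u - of_bool (y \<le> u))\<^sup>2)
        = ennreal ((cdf M u - of_bool (y \<le> u))\<^sup>2)" for u
    proof (cases "u \<in> ?S")
      case False
      then have "cdf M u = 0 \<or> cdf M u = 1"
        using cdf_nonneg[of u] cdf_bounded_prob[of u] by (auto simp: space_\<gamma> zero_less_mult_iff)
      then have "(cdf M u - of_bool (y \<le> u))\<^sup>2 = 0" using elim by fastforce
      then show ?thesis by simp
    qed simp
    have "crps_at (density \<gamma> (indicator ?S)) (cdf M) y
        = (\<integral>\<^sup>+u. indicator ?S u * ennreal ((cdf M u - of_bool (y \<le> u))\<^sup>2) \<partial>\<gamma>)"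
      unfolding crps_at_def
      by (rule nn_integral_density; unfold measurable_cong_sets[OF sets_\<gamma> refl]) (simp_all add: space_\<gamma>)
    also have "\<dots> = crps_at \<gamma> (cdf M) y"
      unfolding crps_at_def by (intro nn_integral_cong) (rule restrict)
    finally show ?case ..
  qed
qed

lemma (in real_distribution) crps_at_eq_top_if_level_set_infinite:
  assumes "0 < c" and infinite: "emeasure \<gamma> {u\<in>space \<gamma>. c \<le> cdf M u * (1 - cdf M u)} = \<infinity>"
  shows "crps_at \<gamma> (cdf M) y = \<infinity>"
  unfolding crps_at_def
proof (rule nn_integral_eq_top_if_ge_on_infinite[OF infinite])
  fix u assume "u \<in> {u\<in>space \<gamma>. c \<le> cdf M u * (1 - cdf M u)}"
  then have "c \<le> cdf M u * (1 - cdf M u)" by simp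
  also have "\<dots> \<le> \<bar>cdf M u - of_bool (y \<le> u)\<bar>"
    using cdf_nonneg[of u] cdf_bounded_prob[of u]
    by (cases "y \<le> u") (auto intro: mult_left_le mult_left_le_one_le)
  finally show "ennreal (c\<^sup>2) \<le> ennreal ((cdf M u - of_bool (y \<le> u))\<^sup>2)"
    using \<open>0 < c\<close> by (intro ennreal_leI) (metis abs_le_square_iff abs_of_pos)
qed (use \<open>0 < c\<close> in simp)

theorem crps_exp_eq_nn_integral_cdf:
  assumes "real_distribution M" and sets_\<gamma>: "sets \<gamma> = sets borel"
  shows "crps_exp \<gamma> M = (\<integral>\<^sup>+u. ennreal (cdf M u * (1 - cdf M u)) \<partial>\<gamma>)"
proof -
  interpret real_distribution M by fact
  define h where "h u = cdf M u * (1 - cdf M u)" for u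
  have [measurable]: "h \<in> borel_measurable \<gamma>"
    unfolding h_def measurable_cong_sets[OF sets_\<gamma> refl] by simp
  have h_nonneg: "0 \<le> h u" for u
    using cdf_nonneg[of u] cdf_bounded_prob[of u] by (simp add: h_def)
  show ?thesis
  proof (cases "\<forall>n::nat. emeasure \<gamma> {u\<in>space \<gamma>. 1 / Suc n \<le> h u} \<noteq> \<infinity>")
    case True
    define \<nu> where "\<nu> = density \<gamma> (indicator {u\<in>space \<gamma>. 0 < h u})"
    have \<nu>: "sigma_finite_measure \<nu>" "sets \<nu> = sets borel"
      unfolding \<nu>_def using True sets_\<gamma> by (auto intro: sigma_finite_density_indicator_pos)
    have "crps_exp \<gamma> M = crps_exp \<nu> M"
      unfolding crps_exp_def \<nu>_def h_def
      by (rule nn_integral_cong_AE[OF AE_crps_at_eq_density_cdf_support]) fact+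
    also have "\<dots> = (\<integral>\<^sup>+u. ennreal (h u) \<partial>\<nu>)"
      unfolding h_def using assms(1) \<nu> by (rule crps_exp_eq_nn_integral_cdf_sigma_finite)
    also have "\<dots> = (\<integral>\<^sup>+u. ennreal (h u) \<partial>\<gamma>)"
      unfolding \<nu>_def using h_nonneg
      by (subst nn_integral_density)
        (auto intro!: nn_integral_cong split: split_indicator simp: less_le h_nonneg)
    finally show ?thesis by (simp add: h_def)
  next
    case False
    then obtain n :: nat where n: "emeasure \<gamma> {u\<in>space \<gamma>. 1 / Suc n \<le> h u} = \<infinity>" by auto
    have "crps_at \<gamma> (cdf M) y = \<infinity>" for y
      by (rule crps_at_eq_top_if_level_set_infinite[OF _ n[unfolded h_def]]) simp
    then have "crps_exp \<gamma> M = \<infinity>"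
      by (simp add: crps_exp_def emeasure_space_1[unfolded space_eq_univ])
    moreover have "(\<integral>\<^sup>+u. ennreal (h u) \<partial>\<gamma>) = \<infinity>"
      by (rule nn_integral_eq_top_if_ge_on_infinite[OF n]) (auto intro: ennreal_leI)
    ultimately show ?thesis by (simp add: h_def)
  qed
qed

section \<open>The normal distribution function\<close>

interpretation std_normal: real_distribution std_normal_measure
  unfolding std_normal_measure_def real_distribution_def real_distribution_axioms_def
  using prob_space_normal_density by auto

lemma cdf_std_normal: "cdf std_normal_measure = std_normal_cdf"
  by (simp add: fun_eq_iff std_normal_cdf_def cdf_def)

lemma std_normal_cdf_nonneg: "0 \<le> std_normal_cdf x"
  using std_normal.cdf_nonneg by (simp add: cdf_std_normal)

lemma std_normal_cdf_le_1: "std_normal_cdf x \<le> 1"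
  using std_normal.cdf_bounded_prob by (simp add: cdf_std_normal)

lemma std_normal_cdf_mono: "x \<le> y \<Longrightarrow> std_normal_cdf x \<le> std_normal_cdf y"
  using std_normal.cdf_nondecreasing by (simp add: cdf_std_normal)

lemma borel_measurable_std_normal_cdf[measurable]: "std_normal_cdf \<in> borel_measurable borel"
  using std_normal.borel_measurable_cdf by (simp add: cdf_std_normal)

lemma tendsto_std_normal_cdf_at_top: "(std_normal_cdf \<longlongrightarrow> 1) at_top"
  using std_normal.cdf_lim_at_top_prob by (simp add: cdf_std_normal)

lemma tendsto_std_normal_cdf_at_bot: "(std_normal_cdf \<longlongrightarrow> 0) at_bot"
  using std_normal.cdf_lim_at_bot by (simp add: cdf_std_normal)

lemma emeasure_std_normal_atMost: "emeasure std_normal_measure {..x} = ennreal (std_normal_cdf x)"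
  using std_normal.emeasure_atMost_cdf by (simp add: cdf_std_normal)

lemma emeasure_std_normal_greaterThan: "emeasure std_normal_measure {x<..} = ennreal (1 - std_normal_cdf x)"
  using std_normal.emeasure_greaterThan_cdf by (simp add: cdf_std_normal)

lemma continuous_on_std_normal_density: "continuous_on A std_normal_density"
  unfolding normal_density_def by (intro continuous_intros) auto

lemma DERIV_std_normal_density: "(std_normal_density has_real_derivative - x * std_normal_density x) (at x)"
  unfolding normal_density_def by (auto intro!: derivative_eq_intros simp: field_simps power2_eq_square)

lemma tendsto_std_normal_density_at_top: "(std_normal_density \<longlongrightarrow> 0) at_top"
  unfolding std_normal_density_def by real_asymp

lemma std_normal_cdf_diff_eq_integral:
  assumes "a \<le> y"
  shows "std_normal_cdf y - std_normal_cdf a = integral {a..y} std_normal_density"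
proof -
  have "(std_normal_density has_integral integral {a..y} std_normal_density) {a..y}"
    by (intro integrable_integral integrable_continuous_interval continuous_on_std_normal_density)
  then have "ennreal (integral {a..y} std_normal_density)
      = (\<integral>\<^sup>+x. ennreal (std_normal_density x) * indicator {a..y} x \<partial>lborel)"
    by (intro nn_integral_has_integral_lebesgue'[symmetric]) simp
  also have "\<dots> = (\<integral>\<^sup>+x. ennreal (std_normal_density x) * indicator {a<..y} x \<partial>lborel)"
    using AE_lborel_singleton[of a] by (intro nn_integral_cong_AE) (auto split: split_indicator)
  also have "\<dots> = emeasure std_normal_measure {a<..y}"
    unfolding std_normal_measure_def by (subst emeasure_density) auto
  also have "\<dots> = ennreal (std_normal_cdf y - std_normal_cdf a)"
    using std_normal.emeasure_Ioc[OF assms] by (simp add: cdf_std_normal)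
  finally have "ennreal (integral {a..y} std_normal_density) = ennreal (std_normal_cdf y - std_normal_cdf a)" .
  moreover have "0 \<le> integral {a..y} std_normal_density"
    using assms by (intro integral_nonneg integrable_continuous_interval continuous_on_std_normal_density) auto
  ultimately show ?thesis
    using std_normal_cdf_mono[OF assms] by (simp add: ennreal_inj)
qed

lemma DERIV_std_normal_cdf: "(std_normal_cdf has_real_derivative std_normal_density x) (at x)"
proof -
  let ?G = "\<lambda>y. std_normal_cdf (x - 1) + integral {x - 1..y} std_normal_density"
  have "(?G has_real_derivative std_normal_density x) (at x within {x - 1..x + 1})"
    by (auto intro!: derivative_eq_intros integral_has_real_derivative continuous_on_std_normal_density)
  then have "(?G has_real_derivative std_normal_density x) (at x)"
    by (simp add: at_within_Icc_at)
  then show ?thesis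
    by (rule has_field_derivative_transform_within_open[where S="{x - 1<..<x + 1}"])
      (auto simp: std_normal_cdf_diff_eq_integral[symmetric])
qed

lemma DERIV_std_normal_cdf_chain[derivative_intros]:
  "(f has_real_derivative f') (at x within s) \<Longrightarrow>
    ((\<lambda>x. std_normal_cdf (f x)) has_real_derivative std_normal_density (f x) * f') (at x within s)"
  by (rule DERIV_chain2[OF DERIV_std_normal_cdf])

lemma DERIV_std_normal_density_chain[derivative_intros]:
  "(f has_real_derivative f') (at x within s) \<Longrightarrow>
    ((\<lambda>x. std_normal_density (f x)) has_real_derivative - f x * std_normal_density (f x) * f') (at x within s)"
  by (rule DERIV_chain2[OF DERIV_std_normal_density])

lemma std_normal_cdf_minus: "std_normal_cdf (- x) = 1 - std_normal_cdf x"
proof -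
  define h where "h x = std_normal_cdf (- x) + std_normal_cdf x" for x
  have "(h has_real_derivative 0) (at y)" for y
  proof -
    have "std_normal_density (- y) = std_normal_density y" by (simp add: normal_density_def)
    then show ?thesis unfolding h_def by (auto intro!: derivative_eq_intros)
  qed
  then have const: "h y = h 0" for y using DERIV_isconst_all[of h] by blast
  have "(h \<longlongrightarrow> 0 + 1) at_top"
    unfolding h_def
    by (intro tendsto_add filterlim_compose[OF tendsto_std_normal_cdf_at_bot] filterlim_uminus_at_bot_at_top
        tendsto_std_normal_cdf_at_top)
  moreover have "(h \<longlongrightarrow> h 0) at_top" by (intro tendsto_eventually always_eventually allI const)
  ultimately have "h 0 = 1" using tendsto_unique by force
  then show ?thesis using const[of x] by (simp add: h_def)
qed

lemma std_normal_tail_le_density: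
  assumes "0 < z"
  shows "z * (1 - std_normal_cdf z) \<le> std_normal_density z"
proof -
  have "ennreal (1 - std_normal_cdf z) = (\<integral>\<^sup>+x. ennreal (std_normal_density x) * indicator {z<..} x \<partial>lborel)"
    unfolding emeasure_std_normal_greaterThan[symmetric] std_normal_measure_def
    by (subst emeasure_density) auto
  also have "\<dots> \<le> (\<integral>\<^sup>+x. ennreal (x * std_normal_density x / z) * indicator {z..} x \<partial>lborel)"
  proof (intro nn_integral_mono)
    fix x
    have "std_normal_density x \<le> x * std_normal_density x / z" if "z < x"
      using assms that by (simp add: field_simps mult_right_mono)
    then show "ennreal (std_normal_density x) * indicator {z<..} x
        \<le> ennreal (x * std_normal_density x / z) * indicator {z..} x"
      by (auto split: split_indicator intro: ennreal_leI)
  qed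
  also have "\<dots> = ennreal (0 - (- std_normal_density z / z))"
  proof (rule nn_integral_FTC_atLeast[where F="\<lambda>x. - std_normal_density x / z"
        and f="\<lambda>x. x * std_normal_density x / z"])
    show "((\<lambda>x. - std_normal_density x / z) has_real_derivative x * std_normal_density x / z) (at x)" for x
      using assms by (auto intro!: derivative_eq_intros)
    have "((\<lambda>x. - std_normal_density x / z) \<longlongrightarrow> - 0 / z) at_top"
      using assms by (intro tendsto_divide tendsto_minus tendsto_const tendsto_std_normal_density_at_top) simp
    then show "((\<lambda>x. - std_normal_density x / z) \<longlongrightarrow> 0) at_top" by simp
  qed (use assms in auto)
  finally show ?thesis
    using assms by (simp add: ennreal_le_iff field_simps)
qed

lemma tendsto_std_normal_tail_at_top: "((\<lambda>z. z * (1 - std_normal_cdf z)) \<longlongrightarrow> 0) at_top"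
proof (rule tendsto_sandwich[OF _ _ tendsto_const tendsto_std_normal_density_at_top])
  show "\<forall>\<^sub>F z in at_top. 0 \<le> z * (1 - std_normal_cdf z)"
    using eventually_ge_at_top[of "0::real"] by eventually_elim (simp add: std_normal_cdf_le_1)
  show "\<forall>\<^sub>F z in at_top. z * (1 - std_normal_cdf z) \<le> std_normal_density z"
    using eventually_gt_at_top[of "0::real"] by eventually_elim (rule std_normal_tail_le_density)
qed

lemma real_distribution_normal_measure: "0 < \<sigma> \<Longrightarrow> real_distribution (normal_measure \<mu> \<sigma>)"
  unfolding normal_measure_def real_distribution_def real_distribution_axioms_def
  using prob_space_normal_density by auto

lemma normal_density_affine_std: "0 < \<sigma> \<Longrightarrow> normal_density \<mu> \<sigma> (\<mu> + \<sigma> * z) = std_normal_density z / \<sigma>"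
  unfolding normal_density_def by (simp add: real_sqrt_mult power_mult_distrib field_simps)

lemma nn_integral_normal_density_substitution:
  assumes "0 < \<sigma>" and [measurable]: "g \<in> borel_measurable borel"
  shows "(\<integral>\<^sup>+x. ennreal (normal_density \<mu> \<sigma> x) * g x \<partial>lborel)
    = (\<integral>\<^sup>+z. ennreal (std_normal_density z) * g (\<mu> + \<sigma> * z) \<partial>lborel)"
proof -
  have "(\<integral>\<^sup>+x. ennreal (normal_density \<mu> \<sigma> x) * g x \<partial>lborel)
      = ennreal \<sigma> * (\<integral>\<^sup>+z. ennreal (std_normal_density z / \<sigma>) * g (\<mu> + \<sigma> * z) \<partial>lborel)"
    using nn_integral_real_affine[where c=\<sigma> and t=\<mu>, of "\<lambda>x. ennreal (normal_density \<mu> \<sigma> x) * g x"] assms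
    by (simp add: normal_density_affine_std)
  also have "\<dots> = (\<integral>\<^sup>+z. ennreal \<sigma> * ennreal (std_normal_density z / \<sigma>) * g (\<mu> + \<sigma> * z) \<partial>lborel)"
    by (simp add: nn_integral_cmult[symmetric] mult.assoc)
  also have "\<dots> = (\<integral>\<^sup>+z. ennreal (std_normal_density z) * g (\<mu> + \<sigma> * z) \<partial>lborel)"
    using assms by (simp add: ennreal_mult[symmetric])
  finally show ?thesis .
qed

lemma nn_integral_normal_density_atMost:
  assumes "0 < \<sigma>"
  shows "(\<integral>\<^sup>+x. ennreal (normal_density \<mu> \<sigma> x) * indicator {..c} x \<partial>lborel) = ennreal (std_normal_cdf ((c - \<mu>) / \<sigma>))"
proof -
  have "indicator {..c} (\<mu> + \<sigma> * z) = (indicator {..(c - \<mu>) / \<sigma>} z :: ennreal)" for z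
    using assms by (simp add: indicator_def field_simps)
  then have "(\<integral>\<^sup>+x. ennreal (normal_density \<mu> \<sigma> x) * indicator {..c} x \<partial>lborel)
      = (\<integral>\<^sup>+z. ennreal (std_normal_density z) * indicator {..(c - \<mu>) / \<sigma>} z \<partial>lborel)"
    using assms by (subst nn_integral_normal_density_substitution) simp_all
  also have "\<dots> = emeasure std_normal_measure {..(c - \<mu>) / \<sigma>}"
    unfolding std_normal_measure_def by (rule emeasure_density[symmetric]) auto
  finally show ?thesis by (simp add: emeasure_std_normal_atMost)
qed

lemma cdf_normal_measure:
  assumes "0 < \<sigma>"
  shows "cdf (normal_measure \<mu> \<sigma>) u = std_normal_cdf ((u - \<mu>) / \<sigma>)"
proof -
  interpret real_distribution "normal_measure \<mu> \<sigma>" using assms by (rule real_distribution_normal_measure)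
  have "ennreal (cdf (normal_measure \<mu> \<sigma>) u) = emeasure (normal_measure \<mu> \<sigma>) {..u}"
    by (rule emeasure_atMost_cdf[symmetric])
  also have "\<dots> = (\<integral>\<^sup>+x. ennreal (normal_density \<mu> \<sigma> x) * indicator {..u} x \<partial>lborel)"
    unfolding normal_measure_def by (rule emeasure_density) auto
  also have "\<dots> = ennreal (std_normal_cdf ((u - \<mu>) / \<sigma>))"
    using assms by (rule nn_integral_normal_density_atMost)
  finally show ?thesis using cdf_nonneg std_normal_cdf_nonneg by (simp add: ennreal_inj)
qed

section \<open>The weight 1{t \<le> u}\<close>

definition crps_std_normal_above :: "real \<Rightarrow> real" where
  "crps_std_normal_above a = a * (std_normal_cdf a)\<^sup>2 - a * std_normal_cdf a + 1 / sqrt pi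
     - 1 / sqrt pi * std_normal_cdf (a * sqrt 2)
     + 2 * std_normal_density a * std_normal_cdf a - std_normal_density a"

lemma std_normal_density_mult_sqrt2:
  "std_normal_density (z * sqrt 2) * sqrt 2 / sqrt pi = 2 * (std_normal_density z)\<^sup>2"
proof -
  have "std_normal_density (z * sqrt 2) * sqrt 2 / sqrt pi = exp (- z\<^sup>2) / pi"
    by (simp add: std_normal_density_def power_mult_distrib real_sqrt_mult field_simps)
  also have "\<dots> = 2 * (std_normal_density z)\<^sup>2"
    by (simp add: std_normal_density_def power_mult_distrib power_divide exp_double[symmetric]
        real_sqrt_mult field_simps)
  finally show ?thesis .
qed

lemma DERIV_crps_std_normal_above:
  "((\<lambda>z. - crps_std_normal_above z) has_real_derivative std_normal_cdf z * (1 - std_normal_cdf z)) (at z)"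
proof -
  have "std_normal_density (z * sqrt 2) = 2 * (std_normal_density z)\<^sup>2 * sqrt pi / sqrt 2"
    using std_normal_density_mult_sqrt2[of z] by (simp add: field_simps)
  then show ?thesis
    unfolding crps_std_normal_above_def
    by (auto intro!: derivative_eq_intros simp: power2_eq_square field_simps)
qed

lemma tendsto_crps_std_normal_above_at_top: "(crps_std_normal_above \<longlongrightarrow> 0) at_top"
proof -
  have "filterlim (\<lambda>z::real. z * sqrt 2) at_top at_top"
    by (intro filterlim_at_top_mult_tendsto_pos[OF tendsto_const] filterlim_ident) auto
  then have "((\<lambda>z. std_normal_cdf (z * sqrt 2)) \<longlongrightarrow> 1) at_top"
    by (rule filterlim_compose[OF tendsto_std_normal_cdf_at_top])
  then have "((\<lambda>z. - (std_normal_cdf z * (z * (1 - std_normal_cdf z))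
      - 1 / sqrt pi * (1 - std_normal_cdf (z * sqrt 2))
      - 2 * std_normal_density z * std_normal_cdf z + std_normal_density z))
      \<longlongrightarrow> - (1 * 0 - 1 / sqrt pi * (1 - 1) - 2 * 0 * 1 + 0)) at_top"
    by (intro tendsto_intros tendsto_std_normal_cdf_at_top tendsto_std_normal_tail_at_top
        tendsto_std_normal_density_at_top)
  also have "(\<lambda>z. - (std_normal_cdf z * (z * (1 - std_normal_cdf z))
      - 1 / sqrt pi * (1 - std_normal_cdf (z * sqrt 2))
      - 2 * std_normal_density z * std_normal_cdf z + std_normal_density z)) = crps_std_normal_above"
    unfolding crps_std_normal_above_def by (simp add: fun_eq_iff power2_eq_square algebra_simps)
  finally show ?thesis by simp
qed

lemma nn_integral_std_normal_cdf_mult_compl_atLeast: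
  "(\<integral>\<^sup>+z. ennreal (std_normal_cdf z * (1 - std_normal_cdf z)) * indicator {a..} z \<partial>lborel)
    = ennreal (crps_std_normal_above a)"
proof -
  have "(\<integral>\<^sup>+z. ennreal (std_normal_cdf z * (1 - std_normal_cdf z)) * indicator {a..} z \<partial>lborel)
      = ennreal (0 - - crps_std_normal_above a)"
  proof (rule nn_integral_FTC_atLeast[where F="\<lambda>z. - crps_std_normal_above z"])
    show "((\<lambda>z. - crps_std_normal_above z) \<longlongrightarrow> 0) at_top"
      using tendsto_minus[OF tendsto_crps_std_normal_above_at_top] by simp
  qed (auto intro: DERIV_crps_std_normal_above simp: std_normal_cdf_nonneg std_normal_cdf_le_1)
  then show ?thesis by simp
qed

lemma crps_std_normal_above_nonneg: "0 \<le> crps_std_normal_above a"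
proof -
  have "- crps_std_normal_above a \<le> - crps_std_normal_above z" if "a \<le> z" for z
  proof (rule DERIV_nonneg_imp_nondecreasing[OF that])
    fix x
    show "\<exists>d. ((\<lambda>z. - crps_std_normal_above z) has_real_derivative d) (at x) \<and> 0 \<le> d"
      using DERIV_crps_std_normal_above[of x] std_normal_cdf_nonneg[of x] std_normal_cdf_le_1[of x] by auto
  qed
  moreover have "((\<lambda>z. - crps_std_normal_above z) \<longlongrightarrow> 0) at_top"
    using tendsto_minus[OF tendsto_crps_std_normal_above_at_top] by simp
  ultimately have "- crps_std_normal_above a \<le> 0"
    by (intro tendsto_lowerbound) (auto simp: eventually_at_top_linorder intro!: exI[of _ a])
  then show ?thesis by simp
qed

theorem crps_exp_gamma1_normal:
  assumes "0 < \<sigma>"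
  shows "crps_exp (gamma1 t) (normal_measure \<mu> \<sigma>) = ennreal (\<sigma> * crps_std_normal_above ((t - \<mu>) / \<sigma>))"
proof -
  let ?F = "\<lambda>u. std_normal_cdf ((u - \<mu>) / \<sigma>)"
  have "crps_exp (gamma1 t) (normal_measure \<mu> \<sigma>) = (\<integral>\<^sup>+u. ennreal (?F u * (1 - ?F u)) \<partial>gamma1 t)"
    using crps_exp_eq_nn_integral_cdf[OF real_distribution_normal_measure[OF assms], of "gamma1 t"] assms
    by (simp add: cdf_normal_measure gamma1_def)
  also have "\<dots> = (\<integral>\<^sup>+u. ennreal (?F u * (1 - ?F u)) * indicator {t..} u \<partial>lborel)"
    unfolding gamma1_def by (subst nn_integral_density) (auto intro!: nn_integral_cong split: split_indicator)
  also have "\<dots> = ennreal \<sigma> * (\<integral>\<^sup>+z. ennreal (std_normal_cdf z * (1 - std_normal_cdf z))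
      * indicator {(t - \<mu>) / \<sigma>..} z \<partial>lborel)"
  proof -
    have "indicator {t..} (\<mu> + \<sigma> * z) = (indicator {(t - \<mu>) / \<sigma>..} z :: ennreal)" for z
      using assms by (simp add: indicator_def field_simps)
    then show ?thesis
      using assms nn_integral_real_affine[where c=\<sigma> and t=\<mu>,
          of "\<lambda>u. ennreal (?F u * (1 - ?F u)) * indicator {t..} u"]
      by simp
  qed
  also have "\<dots> = ennreal (\<sigma> * crps_std_normal_above ((t - \<mu>) / \<sigma>))"
    using assms by (simp add: nn_integral_std_normal_cdf_mult_compl_atLeast ennreal_mult')
  finally show ?thesis .
qed

lemma emeasure_lborel_Ico_eq_pos_part: "emeasure lborel {x..<y} = ennreal (max 0 (y - x))"
  by (cases "x \<le> y") (auto simp: max_def)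

lemma (in real_distribution) nn_integral_pos_part_eq_nn_integral_cdf_compl:
  "(\<integral>\<^sup>+y. ennreal (max 0 (y - b)) \<partial>M) = (\<integral>\<^sup>+s. ennreal (1 - cdf M s) * indicator {b..} s \<partial>lborel)"
proof -
  interpret pair_sigma_finite M lborel ..
  have sets_pair: "sets (M \<Otimes>\<^sub>M lborel) = sets (borel \<Otimes>\<^sub>M borel)"
    by (rule sets_pair_measure_cong[OF events_eq_borel]) simp
  have "(\<integral>\<^sup>+y. ennreal (max 0 (y - b)) \<partial>M)
      = (\<integral>\<^sup>+y. \<integral>\<^sup>+s. of_bool (b \<le> s \<and> s < y) \<partial>lborel \<partial>M)"
  proof (intro nn_integral_cong)
    fix y
    have "of_bool (b \<le> s \<and> s < y) = (indicator {b..<y} s :: ennreal)" for s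
      by (auto split: split_indicator)
    then show "ennreal (max 0 (y - b)) = (\<integral>\<^sup>+s. of_bool (b \<le> s \<and> s < y) \<partial>lborel)"
      by (simp add: emeasure_lborel_Ico_eq_pos_part)
  qed
  also have "\<dots> = (\<integral>\<^sup>+s. \<integral>\<^sup>+y. of_bool (b \<le> s \<and> s < y) \<partial>M \<partial>lborel)"
    by (rule Fubini'[symmetric]) (simp add: measurable_cong_sets[OF sets_pair refl])
  also have "\<dots> = (\<integral>\<^sup>+s. indicator {b..} s * emeasure M {s<..} \<partial>lborel)"
  proof (intro nn_integral_cong)
    fix s
    have "(\<integral>\<^sup>+y. of_bool (b \<le> s \<and> s < y) \<partial>M) = (\<integral>\<^sup>+y. indicator {b..} s * indicator {s<..} y \<partial>M)"
      by (intro nn_integral_cong) (simp split: split_indicator)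
    then show "(\<integral>\<^sup>+y. of_bool (b \<le> s \<and> s < y) \<partial>M) = indicator {b..} s * emeasure M {s<..}"
      by (simp add: nn_integral_cmult_indicator)
  qed
  also have "\<dots> = (\<integral>\<^sup>+s. ennreal (1 - cdf M s) * indicator {b..} s \<partial>lborel)"
    by (simp add: emeasure_greaterThan_cdf mult.commute)
  finally show ?thesis .
qed

lemma nn_integral_pos_part_minus_max:
  assumes "real_distribution M" "real_distribution N"
  shows "(\<integral>\<^sup>+z. ennreal (max 0 (snd z - max (fst z) a)) \<partial>(M \<Otimes>\<^sub>M N))
    = (\<integral>\<^sup>+s. ennreal (cdf M s * (1 - cdf N s)) * indicator {a..} s \<partial>lborel)"
proof -
  interpret M: real_distribution M by fact
  interpret N: real_distribution N by fact
  interpret pair_sigma_finite M lborel ..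
  have sets_MN: "sets (M \<Otimes>\<^sub>M N) = sets (borel \<Otimes>\<^sub>M borel)"
    by (rule sets_pair_measure_cong) (simp_all add: M.events_eq_borel N.events_eq_borel)
  have sets_ML: "sets (M \<Otimes>\<^sub>M lborel) = sets (borel \<Otimes>\<^sub>M borel)"
    by (rule sets_pair_measure_cong) (simp_all add: M.events_eq_borel)
  have "(\<integral>\<^sup>+z. ennreal (max 0 (snd z - max (fst z) a)) \<partial>(M \<Otimes>\<^sub>M N))
      = (\<integral>\<^sup>+x. \<integral>\<^sup>+y. ennreal (max 0 (y - max x a)) \<partial>N \<partial>M)"
    by (subst N.nn_integral_fst[symmetric]) (simp_all add: measurable_cong_sets[OF sets_MN refl])
  also have "\<dots> = (\<integral>\<^sup>+x. \<integral>\<^sup>+s. of_bool (a \<le> s \<and> x \<le> s) * ennreal (1 - cdf N s) \<partial>lborel \<partial>M)"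
  proof (intro nn_integral_cong)
    fix x
    show "(\<integral>\<^sup>+y. ennreal (max 0 (y - max x a)) \<partial>N)
        = (\<integral>\<^sup>+s. of_bool (a \<le> s \<and> x \<le> s) * ennreal (1 - cdf N s) \<partial>lborel)"
      unfolding N.nn_integral_pos_part_eq_nn_integral_cdf_compl
      by (intro nn_integral_cong) (simp split: split_indicator)
  qed
  also have "\<dots> = (\<integral>\<^sup>+s. \<integral>\<^sup>+x. of_bool (a \<le> s \<and> x \<le> s) * ennreal (1 - cdf N s) \<partial>M \<partial>lborel)"
    by (rule Fubini'[symmetric]) (simp add: measurable_cong_sets[OF sets_ML refl])
  also have "\<dots> = (\<integral>\<^sup>+s. ennreal (cdf M s * (1 - cdf N s)) * indicator {a..} s \<partial>lborel)"
  proof (intro nn_integral_cong)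
    fix s
    have "(\<integral>\<^sup>+x. of_bool (a \<le> s \<and> x \<le> s) * ennreal (1 - cdf N s) \<partial>M)
        = (\<integral>\<^sup>+x. (of_bool (a \<le> s) * ennreal (1 - cdf N s)) * indicator {..s} x \<partial>M)"
      by (intro nn_integral_cong) (simp split: split_indicator)
    also have "\<dots> = of_bool (a \<le> s) * ennreal (1 - cdf N s) * ennreal (cdf M s)"
      by (simp add: nn_integral_cmult_indicator M.emeasure_atMost_cdf)
    also have "\<dots> = ennreal (cdf M s * (1 - cdf N s)) * indicator {a..} s"
      using M.cdf_nonneg[of s] by (simp add: ennreal_mult' mult.commute split: split_indicator)
    finally show "(\<integral>\<^sup>+x. of_bool (a \<le> s \<and> x \<le> s) * ennreal (1 - cdf N s) \<partial>M)
        = ennreal (cdf M s * (1 - cdf N s)) * indicator {a..} s" .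
  qed
  finally show ?thesis .
qed

lemma integral_pos_part_minus_max_std_normal:
  "(\<integral>z. max 0 (snd z - max (fst z) a) \<partial>(std_normal_measure \<Otimes>\<^sub>M std_normal_measure))
    = crps_std_normal_above a"
proof -
  have sets_NN: "sets (std_normal_measure \<Otimes>\<^sub>M std_normal_measure) = sets (borel \<Otimes>\<^sub>M borel)"
    by (rule sets_pair_measure_cong) (simp_all add: std_normal.events_eq_borel)
  have "(\<integral>z. max 0 (snd z - max (fst z) a) \<partial>(std_normal_measure \<Otimes>\<^sub>M std_normal_measure))
      = enn2real (\<integral>\<^sup>+z. ennreal (max 0 (snd z - max (fst z) a)) \<partial>(std_normal_measure \<Otimes>\<^sub>M std_normal_measure))"
    by (rule integral_eq_nn_integral) (simp_all add: measurable_cong_sets[OF sets_NN refl])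
  also have "\<dots> = crps_std_normal_above a"
    unfolding nn_integral_pos_part_minus_max[OF std_normal.real_distribution_axioms std_normal.real_distribution_axioms]
    by (simp add: cdf_std_normal nn_integral_std_normal_cdf_mult_compl_atLeast crps_std_normal_above_nonneg)
  finally show ?thesis .
qed

section \<open>The Gaussian weight\<close>

lemma nn_integral_normal_density: "0 < \<sigma> \<Longrightarrow> (\<integral>\<^sup>+x. ennreal (normal_density \<mu> \<sigma> x) \<partial>lborel) = 1"
  using real_distribution_normal_measure[of \<sigma> \<mu>]
  by (simp add: normal_measure_def real_distribution_def prob_space_def prob_space_axioms_def emeasure_density)

lemma nn_integral_exp_neg_quadratic:
  assumes "0 < A"
  shows "(\<integral>\<^sup>+u. ennreal (exp (- (A * (u - t)\<^sup>2 + B * (u - t) + C))) \<partial>lborel)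
    = ennreal (sqrt (pi / A) * exp ((B\<^sup>2 - 4 * A * C) / (4 * A)))"
proof -
  \<comment> \<open>Completing the square turns the integrand into a multiple of a normal density.\<close>
  define m where "m = t - B / (2 * A)"
  define \<tau> where "\<tau> = sqrt (1 / (2 * A))"
  define K where "K = sqrt (pi / A) * exp ((B\<^sup>2 - 4 * A * C) / (4 * A))"
  have \<tau>: "0 < \<tau>" "\<tau>\<^sup>2 = 1 / (2 * A)" using assms by (auto simp: \<tau>_def)
  have "exp (- (A * (u - t)\<^sup>2 + B * (u - t) + C)) = K * normal_density m \<tau> u" for u
  proof -
    have "K * normal_density m \<tau> u = exp ((B\<^sup>2 - 4 * A * C) / (4 * A)) * exp (- (A * (u - m)\<^sup>2))"
      using assms unfolding normal_density_def \<tau>(2) K_def by (simp add: field_simps)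
    also have "\<dots> = exp (- (A * (u - t)\<^sup>2 + B * (u - t) + C))"
      unfolding exp_add[symmetric] m_def using assms by (simp add: field_simps power2_eq_square)
    finally show ?thesis ..
  qed
  then have "(\<integral>\<^sup>+u. ennreal (exp (- (A * (u - t)\<^sup>2 + B * (u - t) + C))) \<partial>lborel)
      = (\<integral>\<^sup>+u. ennreal K * ennreal (normal_density m \<tau> u) \<partial>lborel)"
    using assms by (simp add: K_def ennreal_mult')
  also have "\<dots> = ennreal K"
    by (simp add: nn_integral_cmult nn_integral_normal_density[OF \<tau>(1)])
  finally show ?thesis by (simp add: K_def)
qed

lemma normal_mixture_exponent:
  fixes a b s \<sigma> :: real
  assumes "0 < s" "0 < \<sigma>"
  defines "A \<equiv> 1 / (2 * s\<^sup>2) + 1 / \<sigma>\<^sup>2" and "B \<equiv> (a - b) / \<sigma>\<^sup>2" and "C \<equiv> (a\<^sup>2 + b\<^sup>2) / (2 * \<sigma>\<^sup>2)"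
  shows "(B\<^sup>2 - 4 * A * C) / (4 * A) = - ((s\<^sup>2 + \<sigma>\<^sup>2) * a\<^sup>2 - 2 * (- s\<^sup>2) * a * b + (s\<^sup>2 + \<sigma>\<^sup>2) * b\<^sup>2)
    / (2 * ((s\<^sup>2 + \<sigma>\<^sup>2) * (s\<^sup>2 + \<sigma>\<^sup>2) - (- s\<^sup>2)\<^sup>2))"
proof (rule iffD2[OF frac_eq_eq])
  have "A * (2 * s\<^sup>2 * \<sigma>\<^sup>2) = \<sigma>\<^sup>2 + 2 * s\<^sup>2" "B * \<sigma>\<^sup>2 = a - b" "C * (2 * \<sigma>\<^sup>2) = a\<^sup>2 + b\<^sup>2"
    using assms by (simp_all add: field_simps)
  then show "(B\<^sup>2 - 4 * A * C) * (2 * ((s\<^sup>2 + \<sigma>\<^sup>2) * (s\<^sup>2 + \<sigma>\<^sup>2) - (- s\<^sup>2)\<^sup>2))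
      = - ((s\<^sup>2 + \<sigma>\<^sup>2) * a\<^sup>2 - 2 * (- s\<^sup>2) * a * b + (s\<^sup>2 + \<sigma>\<^sup>2) * b\<^sup>2) * (4 * A)"
    using assms by algebra
  have "0 < A" using assms by (simp add: A_def add_pos_pos)
  moreover have "0 < (s\<^sup>2 + \<sigma>\<^sup>2) * (s\<^sup>2 + \<sigma>\<^sup>2) - (- s\<^sup>2)\<^sup>2"
    using assms by (simp add: power2_eq_square algebra_simps add_pos_pos)
  ultimately show "4 * A \<noteq> 0" "2 * ((s\<^sup>2 + \<sigma>\<^sup>2) * (s\<^sup>2 + \<sigma>\<^sup>2) - (- s\<^sup>2)\<^sup>2) \<noteq> 0" by simp_all
qed

lemma normal_mixture_prefactor:
  fixes s \<sigma> :: real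
  assumes "0 < s" "0 < \<sigma>"
  defines "A \<equiv> 1 / (2 * s\<^sup>2) + 1 / \<sigma>\<^sup>2"
  shows "sqrt (pi / A) / (sqrt (2 * pi * s\<^sup>2) * sqrt (2 * pi * \<sigma>\<^sup>2) * sqrt (2 * pi * \<sigma>\<^sup>2))
    = 1 / (2 * pi * sqrt ((s\<^sup>2 + \<sigma>\<^sup>2) * (s\<^sup>2 + \<sigma>\<^sup>2) - (- s\<^sup>2)\<^sup>2))"
proof -
  define d where "d = (s\<^sup>2 + \<sigma>\<^sup>2) * (s\<^sup>2 + \<sigma>\<^sup>2) - (- s\<^sup>2)\<^sup>2"
  have A: "0 < A" "A * (2 * s\<^sup>2 * \<sigma>\<^sup>2) = \<sigma>\<^sup>2 + 2 * s\<^sup>2"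
    using assms by (simp_all add: A_def add_pos_pos field_simps)
  have d: "d = \<sigma>\<^sup>2 * (\<sigma>\<^sup>2 + 2 * s\<^sup>2)" "0 < d"
    using assms by (simp_all add: d_def power2_eq_square algebra_simps add_pos_pos)
  have "(sqrt (pi / A) / (sqrt (2 * pi * s\<^sup>2) * sqrt (2 * pi * \<sigma>\<^sup>2) * sqrt (2 * pi * \<sigma>\<^sup>2)))\<^sup>2
      = pi / ((2 * pi * s\<^sup>2) * (2 * pi * \<sigma>\<^sup>2) * (2 * pi * \<sigma>\<^sup>2) * A)"
    using A by (simp add: power_mult_distrib power_divide)
  also have "\<dots> = 1 / (4 * pi\<^sup>2 * d)"
  proof (rule iffD2[OF frac_eq_eq])
    show "pi * (4 * pi\<^sup>2 * d) = 1 * ((2 * pi * s\<^sup>2) * (2 * pi * \<sigma>\<^sup>2) * (2 * pi * \<sigma>\<^sup>2) * A)"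
      using A(2) d(1) by algebra
  qed (use assms A d in auto)
  also have "\<dots> = (1 / (2 * pi * sqrt d))\<^sup>2"
    using d by (simp add: power_mult_distrib power_divide)
  finally show ?thesis
    unfolding d_def[symmetric] by (rule power2_eq_imp_eq) (use A d in simp_all)
qed

lemma bvn_density_eq_normal_mixture:
  assumes "0 < s" "0 < \<sigma>"
  shows "ennreal (bvn_density (\<mu> - t) (t - \<mu>) (s\<^sup>2 + \<sigma>\<^sup>2) (- s\<^sup>2) (s\<^sup>2 + \<sigma>\<^sup>2) (x\<^sub>1, x\<^sub>2))
    = (\<integral>\<^sup>+u. ennreal (normal_density t s u * normal_density (\<mu> - u) \<sigma> x\<^sub>1 * normal_density (u - \<mu>) \<sigma> x\<^sub>2) \<partial>lborel)"
proof -
  define a b where "a = x\<^sub>1 - (\<mu> - t)" and "b = x\<^sub>2 - (t - \<mu>)"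
  define A B C where "A = 1 / (2 * s\<^sup>2) + 1 / \<sigma>\<^sup>2" and "B = (a - b) / \<sigma>\<^sup>2"
    and "C = (a\<^sup>2 + b\<^sup>2) / (2 * \<sigma>\<^sup>2)"
  define c where "c = 1 / (sqrt (2 * pi * s\<^sup>2) * sqrt (2 * pi * \<sigma>\<^sup>2) * sqrt (2 * pi * \<sigma>\<^sup>2))"
  have "0 < A" using assms by (simp add: A_def add_pos_pos)
  have "0 \<le> c" by (simp add: c_def)
  have "normal_density t s u * normal_density (\<mu> - u) \<sigma> x\<^sub>1 * normal_density (u - \<mu>) \<sigma> x\<^sub>2
      = c * exp (- (A * (u - t)\<^sup>2 + B * (u - t) + C))" for u
  proof -
    have "- (u - t)\<^sup>2 / (2 * s\<^sup>2) + - (x\<^sub>1 - (\<mu> - u))\<^sup>2 / (2 * \<sigma>\<^sup>2) + - (x\<^sub>2 - (u - \<mu>))\<^sup>2 / (2 * \<sigma>\<^sup>2)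
        = - (A * (u - t)\<^sup>2 + B * (u - t) + C)"
      unfolding A_def B_def C_def a_def b_def using assms
      by (simp add: field_simps power2_eq_square; simp add: algebra_simps)
    then show ?thesis
      unfolding normal_density_def c_def by (simp add: exp_add[symmetric])
  qed
  then have "(\<integral>\<^sup>+u. ennreal (normal_density t s u * normal_density (\<mu> - u) \<sigma> x\<^sub>1 * normal_density (u - \<mu>) \<sigma> x\<^sub>2) \<partial>lborel)
      = ennreal c * (\<integral>\<^sup>+u. ennreal (exp (- (A * (u - t)\<^sup>2 + B * (u - t) + C))) \<partial>lborel)"
    using \<open>0 \<le> c\<close> by (simp add: ennreal_mult' nn_integral_cmult)
  also have "\<dots> = ennreal (c * sqrt (pi / A) * exp ((B\<^sup>2 - 4 * A * C) / (4 * A)))"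
    unfolding nn_integral_exp_neg_quadratic[OF \<open>0 < A\<close>] using \<open>0 \<le> c\<close> by (simp add: ennreal_mult' mult.assoc)
  also have "\<dots> = ennreal (bvn_density (\<mu> - t) (t - \<mu>) (s\<^sup>2 + \<sigma>\<^sup>2) (- s\<^sup>2) (s\<^sup>2 + \<sigma>\<^sup>2) (x\<^sub>1, x\<^sub>2))"
    using normal_mixture_exponent[OF assms, of a b] normal_mixture_prefactor[OF assms]
    by (simp add: bvn_density_def Let_def a_def b_def A_def B_def C_def c_def)
  finally show ?thesis ..
qed

lemma (in pair_sigma_finite) nn_integral_fst_snd_mult:
  assumes [measurable]: "f \<in> borel_measurable M1" "g \<in> borel_measurable M2"
  shows "(\<integral>\<^sup>+z. f (fst z) * g (snd z) \<partial>(M1 \<Otimes>\<^sub>M M2)) = (\<integral>\<^sup>+x. f x \<partial>M1) * (\<integral>\<^sup>+y. g y \<partial>M2)"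
proof -
  have "(\<integral>\<^sup>+z. f (fst z) * g (snd z) \<partial>(M1 \<Otimes>\<^sub>M M2)) = (\<integral>\<^sup>+x. \<integral>\<^sup>+y. f x * g y \<partial>M2 \<partial>M1)"
    by (subst M2.nn_integral_fst[symmetric]) simp_all
  also have "\<dots> = (\<integral>\<^sup>+x. f x \<partial>M1) * (\<integral>\<^sup>+y. g y \<partial>M2)"
    by (simp add: nn_integral_cmult nn_integral_multc)
  finally show ?thesis .
qed

lemma borel_measurable_normal_density_compose[measurable]:
  assumes [measurable]: "f \<in> borel_measurable M" "g \<in> borel_measurable M"
  shows "(\<lambda>x. normal_density (f x) \<sigma> (g x)) \<in> borel_measurable M"
  unfolding normal_density_def by measurable

lemma nn_integral_normal_density_pair_quadrant:
  assumes "0 < \<sigma>\<^sub>1" "0 < \<sigma>\<^sub>2"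
  shows "(\<integral>\<^sup>+z. ennreal (normal_density m\<^sub>1 \<sigma>\<^sub>1 (fst z) * normal_density m\<^sub>2 \<sigma>\<^sub>2 (snd z))
      * indicator ({..c\<^sub>1} \<times> {..c\<^sub>2}) z \<partial>lborel)
    = ennreal (std_normal_cdf ((c\<^sub>1 - m\<^sub>1) / \<sigma>\<^sub>1) * std_normal_cdf ((c\<^sub>2 - m\<^sub>2) / \<sigma>\<^sub>2))"
proof -
  let ?g\<^sub>1 = "\<lambda>x. ennreal (normal_density m\<^sub>1 \<sigma>\<^sub>1 x) * indicator {..c\<^sub>1} x"
  let ?g\<^sub>2 = "\<lambda>y. ennreal (normal_density m\<^sub>2 \<sigma>\<^sub>2 y) * indicator {..c\<^sub>2} y"
  have "(\<integral>\<^sup>+z. ennreal (normal_density m\<^sub>1 \<sigma>\<^sub>1 (fst z) * normal_density m\<^sub>2 \<sigma>\<^sub>2 (snd z))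
      * indicator ({..c\<^sub>1} \<times> {..c\<^sub>2}) z \<partial>lborel) = (\<integral>\<^sup>+z. ?g\<^sub>1 (fst z) * ?g\<^sub>2 (snd z) \<partial>(lborel \<Otimes>\<^sub>M lborel))"
    unfolding lborel_prod
    by (intro nn_integral_cong) (simp add: ennreal_mult' indicator_times mult_ac split: split_indicator)
  also have "\<dots> = (\<integral>\<^sup>+x. ?g\<^sub>1 x \<partial>lborel) * (\<integral>\<^sup>+y. ?g\<^sub>2 y \<partial>lborel)"
    by (rule lborel_pair.nn_integral_fst_snd_mult) simp_all
  also have "\<dots> = ennreal (std_normal_cdf ((c\<^sub>1 - m\<^sub>1) / \<sigma>\<^sub>1) * std_normal_cdf ((c\<^sub>2 - m\<^sub>2) / \<sigma>\<^sub>2))"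
    using assms by (simp add: nn_integral_normal_density_atMost ennreal_mult' std_normal_cdf_nonneg)
  finally show ?thesis .
qed

lemma emeasure_bvn_quadrant_eq_normal_mixture:
  assumes "0 < s" "0 < \<sigma>"
  shows "emeasure (density lborel (\<lambda>z. ennreal (bvn_density (\<mu> - t) (t - \<mu>) (s\<^sup>2 + \<sigma>\<^sup>2) (- s\<^sup>2) (s\<^sup>2 + \<sigma>\<^sup>2) z)))
      ({..0} \<times> {..0})
    = (\<integral>\<^sup>+u. ennreal (normal_density t s u * std_normal_cdf ((\<mu> - u) / \<sigma>) * std_normal_cdf ((u - \<mu>) / \<sigma>)) \<partial>lborel)"
proof -
  let ?f = "bvn_density (\<mu> - t) (t - \<mu>) (s\<^sup>2 + \<sigma>\<^sup>2) (- s\<^sup>2) (s\<^sup>2 + \<sigma>\<^sup>2)"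
  let ?Q = "{..0::real} \<times> {..0::real}"
  let ?g = "\<lambda>u z. ennreal (normal_density (\<mu> - u) \<sigma> (fst z) * normal_density (u - \<mu>) \<sigma> (snd z)) * indicator ?Q z"
  have sets_triple: "sets ((lborel :: (real \<times> real) measure) \<Otimes>\<^sub>M lborel) = sets ((borel \<Otimes>\<^sub>M borel) \<Otimes>\<^sub>M borel)"
    by (rule sets_pair_measure_cong) (simp_all only: borel_prod sets_lborel)
  have "?f \<in> borel_measurable (borel \<Otimes>\<^sub>M borel)"
    unfolding bvn_density_def Let_def by measurable
  then have [measurable]: "?f \<in> borel_measurable borel" "?Q \<in> sets borel"
    unfolding borel_prod[symmetric] by auto
  have "?g u \<in> borel_measurable (borel \<Otimes>\<^sub>M borel)" for u
    by measurable
  then have g_measurable: "?g u \<in> borel_measurable borel" for u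
    unfolding borel_prod .
  have "emeasure (density lborel (\<lambda>z. ennreal (?f z))) ?Q = (\<integral>\<^sup>+z. ennreal (?f z) * indicator ?Q z \<partial>lborel)"
    by (rule emeasure_density; measurable)
  also have "\<dots> = (\<integral>\<^sup>+z. \<integral>\<^sup>+u. ennreal (normal_density t s u) * ?g u z \<partial>lborel \<partial>lborel)"
  proof (intro nn_integral_cong)
    fix z :: "real \<times> real"
    have "ennreal (?f z) * indicator ?Q z = (\<integral>\<^sup>+u. ennreal (normal_density t s u
        * normal_density (\<mu> - u) \<sigma> (fst z) * normal_density (u - \<mu>) \<sigma> (snd z)) * indicator ?Q z \<partial>lborel)"
      using bvn_density_eq_normal_mixture[OF assms, of \<mu> t "fst z" "snd z"]
      by (simp add: nn_integral_multc)
    also have "\<dots> = (\<integral>\<^sup>+u. ennreal (normal_density t s u) * ?g u z \<partial>lborel)"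
      by (intro nn_integral_cong) (simp add: ennreal_mult' mult_ac)
    finally show "ennreal (?f z) * indicator ?Q z = (\<integral>\<^sup>+u. ennreal (normal_density t s u) * ?g u z \<partial>lborel)" .
  qed
  also have "\<dots> = (\<integral>\<^sup>+u. \<integral>\<^sup>+z. ennreal (normal_density t s u) * ?g u z \<partial>lborel \<partial>lborel)"
    by (rule lborel_pair.Fubini'[symmetric]) (simp add: measurable_cong_sets[OF sets_triple refl])
  also have "\<dots> = (\<integral>\<^sup>+u. ennreal (normal_density t s u) * ennreal (std_normal_cdf ((u - \<mu>) / \<sigma>)
      * std_normal_cdf ((\<mu> - u) / \<sigma>)) \<partial>lborel)"
    using assms by (subst nn_integral_cmult)
      (simp_all add: g_measurable nn_integral_normal_density_pair_quadrant)
  also have "\<dots> = (\<integral>\<^sup>+u. ennreal (normal_density t s u * std_normal_cdf ((\<mu> - u) / \<sigma>) * std_normal_cdf ((u - \<mu>) / \<sigma>)) \<partial>lborel)"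
    by (simp add: ennreal_mult' std_normal_cdf_nonneg mult_ac)
  finally show ?thesis .
qed

theorem crps_exp_gamma2_normal:
  assumes "0 < \<sigma>" "0 < s"
  shows "crps_exp (gamma2 t s) (normal_measure \<mu> \<sigma>)
    = ennreal (bvn_cdf (0, 0) (\<mu> - t, t - \<mu>) (s\<^sup>2 + \<sigma>\<^sup>2, - s\<^sup>2, s\<^sup>2 + \<sigma>\<^sup>2))"
proof -
  let ?F = "\<lambda>u. std_normal_cdf ((u - \<mu>) / \<sigma>)"
  let ?X = "\<integral>\<^sup>+u. ennreal (normal_density t s u * std_normal_cdf ((\<mu> - u) / \<sigma>) * ?F u) \<partial>lborel"
  let ?P = "density lborel (\<lambda>z. ennreal (bvn_density (\<mu> - t) (t - \<mu>) (s\<^sup>2 + \<sigma>\<^sup>2) (- s\<^sup>2) (s\<^sup>2 + \<sigma>\<^sup>2) z))"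
  have "crps_exp (gamma2 t s) (normal_measure \<mu> \<sigma>) = (\<integral>\<^sup>+u. ennreal (?F u * (1 - ?F u)) \<partial>gamma2 t s)"
    using crps_exp_eq_nn_integral_cdf[OF real_distribution_normal_measure[OF assms(1)], of "gamma2 t s"] assms
    by (simp add: cdf_normal_measure gamma2_def)
  also have "\<dots> = ?X"
  proof -
    have "normal_density t s u = std_normal_density ((u - t) / s) / s" for u
      using normal_density_affine_std[OF assms(2), of t "(u - t) / s"] assms by simp
    moreover have "1 - ?F u = std_normal_cdf ((\<mu> - u) / \<sigma>)" for u
      using std_normal_cdf_minus[of "(u - \<mu>) / \<sigma>"] by (simp add: minus_divide_left)
    ultimately show ?thesis
      unfolding gamma2_def using assms
      by (subst nn_integral_density) (auto intro!: nn_integral_cong simp: ennreal_mult'[symmetric] mult_ac)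
  qed
  also have "\<dots> = emeasure ?P ({..0} \<times> {..0})"
    using emeasure_bvn_quadrant_eq_normal_mixture[OF assms(2,1)] by simp
  also have "\<dots> = ennreal (bvn_cdf (0, 0) (\<mu> - t, t - \<mu>) (s\<^sup>2 + \<sigma>\<^sup>2, - s\<^sup>2, s\<^sup>2 + \<sigma>\<^sup>2))"
  proof -
    have "normal_density t s u * (std_normal_cdf ((\<mu> - u) / \<sigma>) * ?F u) \<le> normal_density t s u" for u
      by (intro mult_left_le mult_le_one) (simp_all add: std_normal_cdf_nonneg std_normal_cdf_le_1)
    then have "?X \<le> (\<integral>\<^sup>+u. ennreal (normal_density t s u) \<partial>lborel)"
      by (intro nn_integral_mono ennreal_leI) (simp add: mult.assoc)
    then have "emeasure ?P ({..0} \<times> {..0}) \<noteq> \<infinity>"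
      using emeasure_bvn_quadrant_eq_normal_mixture[OF assms(2,1)] nn_integral_normal_density[OF assms(2)]
      by (auto simp: top_unique)
    then show ?thesis by (simp add: bvn_cdf_def emeasure_eq_ennreal_measure)
  qed
  finally show ?thesis .
qed

theorem theorem2:
  fixes M \<gamma> :: "real measure" and \<mu> \<sigma> t s\<^sub>\<gamma> :: real
  assumes "real_distribution M"
    and "sets \<gamma> = sets borel"
    and "\<sigma> > 0" and "s\<^sub>\<gamma> > 0"
  shows "(crps_exp \<gamma> M = (\<integral>\<^sup>+ u. ennreal (cdf M u * (1 - cdf M u)) \<partial>\<gamma>)) \<and>
         (crps_exp (gamma1 t) (normal_measure \<mu> \<sigma>) =
           ennreal (\<sigma> * (let tt = (t - \<mu>) / \<sigma> in
              tt * (std_normal_cdf tt)\<^sup>2 - tt * std_normal_cdf tt + 1 / sqrt pi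
              - 1 / sqrt pi * std_normal_cdf (tt * sqrt 2)
              + 2 * std_normal_density tt * std_normal_cdf tt - std_normal_density tt))) \<and>
         (crps_exp (gamma1 t) (normal_measure \<mu> \<sigma>) =
           ennreal (\<sigma> * (\<integral>z. max 0 (snd z - max (fst z) ((t - \<mu>) / \<sigma>))
                             \<partial>(std_normal_measure \<Otimes>\<^sub>M std_normal_measure)))) \<and>
         (crps_exp (gamma2 t s\<^sub>\<gamma>) (normal_measure \<mu> \<sigma>) =
           ennreal (bvn_cdf (0, 0) (\<mu> - t, t - \<mu>)
                      (s\<^sub>\<gamma>\<^sup>2 + \<sigma>\<^sup>2, - s\<^sub>\<gamma>\<^sup>2, s\<^sub>\<gamma>\<^sup>2 + \<sigma>\<^sup>2)))"
  unfolding Let_def crps_std_normal_above_def[symmetric] crps_exp_gamma1_normal[OF assms(3)]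
    integral_pos_part_minus_max_std_normal
  using crps_exp_eq_nn_integral_cdf[OF assms(1,2)] crps_exp_gamma2_normal[OF assms(3,4)] by blast

end
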